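(* Let $X \in \mathbb{R}^{n\times p}$, let $k$ be a positive integer, let $A \in \mathbb{R}^{p\times k}$ satisfy $A^T A = I_k$, and let $\lambda, \lambda_1 > 0$. Let $B \in \mathbb{R}^{p\times k}$ be a minimizer of the convex function $$B \mapsto \|X - X B A^T\|_F^2 + \lambda \|B\|_F^2 + \lambda_1 \sum_{i=1}^p \|B_{(i)}\|_2 .$$ For $i = 1,\ldots,p$ define $b_i = \sum_{j\neq i} \big(X^{(j)T} X^{(i)}\big) B_{(j)}^T \in \mathbb{R}^{k}$. Then for each $i$, $B_{(i)} = 0$ if and only if $\|A^T X^T X^{(i)} - b_i\|_2 \le \lambda_1/2$.
   Context: For a matrix $M$, $M_{(i)}$ denotes its $i$-th row (as a row vector) and $M^{(i)}$ its $i$-th column. $\|\cdot\|_F$ is the Frobenius norm and $\|\cdot\|_2$ the Euclidean norm; $I_k$ is the $k\times k$ identity matrix. *)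

theory Defs
  imports "HOL-Analysis.Analysis"
begin

definition frob_norm :: "real^'n^'m \<Rightarrow> real" where
  "frob_norm M = sqrt (\<Sum>i\<in>UNIV. \<Sum>j\<in>UNIV. (M $ i $ j)^2)"

definition spca_obj :: "real^'p^'n \<Rightarrow> real^'k^'p \<Rightarrow> real \<Rightarrow> real \<Rightarrow> real^'k^'p \<Rightarrow> real" where
  "spca_obj X A lam lam1 B =
     (frob_norm (X - X ** B ** transpose A))^2 + lam * (frob_norm B)^2
     + lam1 * (\<Sum>i\<in>UNIV. norm (B $ i))"

end

theory Submission
  imports Defs
begin

text \<open>Fix every row of \<open>B\<close> except the \<open>i\<close>-th. Since \<open>A\<^sup>T A = I\<close>, the objective as a
  function of that row \<open>v\<close> is \<open>K + (\<parallel>X\<^sup>(\<^sup>i\<^sup>)\<parallel>\<^sup>2 + \<lambda>) \<parallel>v\<parallel>\<^sup>2 - 2 (d \<bullet> v) + \<lambda>\<^sub>1 \<parallel>v\<parallel>\<close> with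
  \<open>d = A\<^sup>T X\<^sup>T X\<^sup>(\<^sup>i\<^sup>) - b\<^sub>i\<close>, and it is minimized at \<open>B\<^sub>(\<^sub>i\<^sub>)\<close>. Such a group-lasso function has
  its minimum at \<open>0\<close> exactly when \<open>\<parallel>d\<parallel> \<le> \<lambda>\<^sub>1/2\<close>: otherwise it decreases when moving from \<open>0\<close>
  along \<open>d\<close>, and if the bound holds, Cauchy-Schwarz makes every \<open>v \<noteq> 0\<close> worse than \<open>0\<close>.\<close>

lemma group_lasso_minimizer_eq_0_iff:
  fixes d u :: "'a::real_inner" and a c :: real
  assumes a_pos: "a > 0" and c_nonneg: "c \<ge> 0"
    and u_min: "\<And>v. a * (u \<bullet> u) - 2 * (d \<bullet> u) + c * norm u \<le> a * (v \<bullet> v) - 2 * (d \<bullet> v) + c * norm v"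
  shows "u = 0 \<longleftrightarrow> norm d \<le> c / 2"
proof
  assume "u = 0"
  show "norm d \<le> c / 2"
  proof (rule ccontr)
    assume "\<not> norm d \<le> c / 2"
    then have gap: "2 * norm d - c > 0" by simp
    then have d_pos: "norm d > 0" using c_nonneg by linarith
    define t where "t = (2 * norm d - c) / (2 * a * norm d)"
    have t_pos: "t > 0" using gap a_pos d_pos by (simp add: t_def)
    have "0 \<le> a * ((t *\<^sub>R d) \<bullet> (t *\<^sub>R d)) - 2 * (d \<bullet> (t *\<^sub>R d)) + c * norm (t *\<^sub>R d)"
      using u_min[of "t *\<^sub>R d"] \<open>u = 0\<close> by simp
    also have "\<dots> = t * norm d * (a * t * norm d - (2 * norm d - c))"
      using t_pos by (simp add: power2_norm_eq_inner[symmetric] power2_eq_square algebra_simps)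
    also have "a * t * norm d = (2 * norm d - c) / 2"
      using a_pos d_pos by (simp add: t_def field_simps)
    also have "t * norm d * ((2 * norm d - c) / 2 - (2 * norm d - c)) < 0"
      using t_pos d_pos gap by (simp add: mult_pos_neg)
    finally show False by simp
  qed
next
  assume d_small: "norm d \<le> c / 2"
  have "d \<bullet> u \<le> c / 2 * norm u"
    using norm_cauchy_schwarz[of d u] d_small by (meson mult_right_mono norm_ge_zero order_trans)
  then have "a * (u \<bullet> u) \<le> 0" using u_min[of 0] by simp
  then have "u \<bullet> u \<le> 0" using a_pos by (simp add: mult_le_0_iff)
  then show "u = 0" by (metis inner_eq_zero_iff inner_ge_zero order_antisym)
qed

definition replace_row :: "'a^'n^'m \<Rightarrow> 'm \<Rightarrow> 'a^'n \<Rightarrow> 'a^'n^'m" where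
  "replace_row M i v = (\<chi> j. if j = i then v else M $ j)"

definition outer_prod :: "'a::times^'m \<Rightarrow> 'a^'n \<Rightarrow> 'a^'n^'m" where
  "outer_prod x y = (\<chi> r s. x $ r * y $ s)"

lemma replace_row_nth [simp]: "replace_row M i v $ j = (if j = i then v else M $ j)"
  by (simp add: replace_row_def)

lemma replace_row_same [simp]: "replace_row M i (M $ i) = M"
  by (simp add: vec_eq_iff)

lemma sum_rows_replace_row:
  "(\<Sum>r\<in>UNIV. f (replace_row M i v $ r)) = (\<Sum>r\<in>UNIV - {i}. f (M $ r)) + f v"
  by (simp add: sum.remove[of UNIV i] add.commute)

lemma matrix_add_rdistrib: "((P::'a::semiring_1^'n^'m) + Q) ** C = P ** C + Q ** C"
  by (simp add: matrix_matrix_mult_def vec_eq_iff sum.distrib algebra_simps)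

lemma matrix_mult_replace_row:
  fixes X :: "'a::comm_semiring_1^'p^'n"
  shows "X ** replace_row B i v = X ** replace_row B i 0 + outer_prod (column i X) v"
proof -
  have "(\<Sum>j\<in>UNIV. X$r$j * replace_row B i v $j$m)
      = (\<Sum>j\<in>UNIV. X$r$j * replace_row B i 0 $j$m) + X$r$i * v$m" for r m
    by (simp add: sum.remove[of UNIV i] if_distrib add.commute cong: if_cong)
  then show ?thesis
    by (simp add: matrix_matrix_mult_def outer_prod_def column_def vec_eq_iff)
qed

lemma outer_prod_mult_transpose:
  fixes x :: "'a::comm_semiring_1^'m"
  shows "outer_prod x v ** transpose A = outer_prod x (A *v v)"
  by (simp add: outer_prod_def matrix_matrix_mult_def matrix_vector_mult_def transpose_def
      vec_eq_iff sum_distrib_left mult.commute mult.left_commute)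

lemma frob_norm_sq: "(frob_norm (M::real^'n^'m))\<^sup>2 = (\<Sum>r\<in>UNIV. M $ r \<bullet> M $ r)"
  unfolding frob_norm_def
  by (subst real_sqrt_pow2) (auto intro!: sum_nonneg simp: inner_vec_def power2_eq_square)

lemma frob_norm_sq_diff_outer_prod:
  fixes R :: "real^'l^'n"
  shows "(frob_norm (R - outer_prod x w))\<^sup>2
     = (frob_norm R)\<^sup>2 - 2 * (x \<bullet> (R *v w)) + (x \<bullet> x) * (w \<bullet> w)"
proof -
  have row: "(R - outer_prod x w) $ r = R $ r - x $ r *\<^sub>R w" for r
    by (simp add: outer_prod_def vec_eq_iff)
  have "(frob_norm (R - outer_prod x w))\<^sup>2
      = (\<Sum>r\<in>UNIV. R $ r \<bullet> R $ r - 2 * (x $ r * (R *v w) $ r) + (x $ r * x $ r) * (w \<bullet> w))"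
    unfolding frob_norm_sq row
    by (intro sum.cong) (simp_all add: inner_diff_left inner_diff_right
        matrix_vector_mul_component inner_commute algebra_simps)
  also have "\<dots> = (frob_norm R)\<^sup>2 - 2 * (x \<bullet> (R *v w)) + (x \<bullet> x) * (w \<bullet> w)"
    unfolding frob_norm_sq inner_vec_def[of x]
    by (simp add: sum.distrib sum_subtractf sum_distrib_left sum_distrib_right)
  finally show ?thesis .
qed

lemma inner_isometry:
  fixes A :: "real^'k^'p"
  assumes "transpose A ** A = mat 1"
  shows "(A *v v) \<bullet> (A *v w) = v \<bullet> w"
  by (metis assms dot_lmul_matrix matrix_vector_mul_assoc matrix_vector_mul_lid
      transpose_matrix_vector)

lemma vector_matrix_mult_replace_row_0:
  "y v* replace_row B i (0::real^'k) = (\<Sum>j\<in>UNIV - {i}. y $ j *\<^sub>R B $ j)"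
proof -
  have "(\<Sum>j\<in>UNIV. y $ j * replace_row B i 0 $ j $ m) = (\<Sum>j\<in>UNIV - {i}. y $ j * B $ j $ m)" for m
    by (simp add: sum.remove[of UNIV i])
  then show ?thesis by (simp add: vector_matrix_mult_def vec_eq_iff)
qed

lemma column_vector_matrix_mult:
  "column i X v* (X::real^'p^'n) = (\<chi> j. column j X \<bullet> column i X)"
  by (simp add: vector_matrix_mult_def column_def inner_vec_def mult.commute vec_eq_iff)

lemma spca_obj_replace_row:
  fixes X :: "real^'p^'n" and A B :: "real^'k^'p"
  assumes orth: "transpose A ** A = mat 1"
  shows "spca_obj X A lam lam1 (replace_row B i v)
    = spca_obj X A lam lam1 (replace_row B i 0)
      + (column i X \<bullet> column i X + lam) * (v \<bullet> v)
      - 2 * ((transpose A *v (transpose X *v column i X)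
              - (\<Sum>j\<in>UNIV - {i}. (column j X \<bullet> column i X) *\<^sub>R B $ j)) \<bullet> v)
      + lam1 * norm v"
    (is "_ = _ + _ - 2 * (?d \<bullet> v) + _")
proof -
  define x where "x = column i X"
  define B0 where "B0 = replace_row B i 0"
  define R where "R = X - X ** B0 ** transpose A"
  \<comment> \<open>instantiated, since as a rewrite rule it would loop on its own right-hand side\<close>
  have residual: "X - X ** replace_row B i v ** transpose A = R - outer_prod x (A *v v)"
    unfolding matrix_mult_replace_row[of X B i v] matrix_add_rdistrib outer_prod_mult_transpose
      R_def B0_def x_def
    by simp
  have "(X ** B0 ** transpose A) *v (A *v v) = X *v (B0 *v v)"
    by (metis matrix_vector_mul_assoc orth matrix_vector_mul_lid)
  then have "x \<bullet> (R *v (A *v v)) = x \<bullet> (X *v (A *v v)) - x \<bullet> (X *v (B0 *v v))"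
    unfolding R_def matrix_vector_mult_diff_rdistrib inner_diff_right by (rule arg_cong)
  also have "\<dots> = ((x v* X) v* A) \<bullet> v - ((x v* X) v* B0) \<bullet> v"
    by (simp only: dot_lmul_matrix)
  also have "\<dots> = ?d \<bullet> v"
    by (simp add: B0_def x_def vector_matrix_mult_replace_row_0 column_vector_matrix_mult
        inner_diff_left)
  finally have cross: "x \<bullet> (R *v (A *v v)) = ?d \<bullet> v" .
  have fit: "(frob_norm (X - X ** replace_row B i v ** transpose A))\<^sup>2
      = (frob_norm R)\<^sup>2 - 2 * (?d \<bullet> v) + (x \<bullet> x) * (v \<bullet> v)"
    unfolding residual frob_norm_sq_diff_outer_prod cross inner_isometry[OF orth] ..
  have ridge: "(frob_norm (replace_row B i v))\<^sup>2 = (frob_norm B0)\<^sup>2 + v \<bullet> v"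
    unfolding frob_norm_sq B0_def sum_rows_replace_row[where f = "\<lambda>u. u \<bullet> u"] by simp
  have lasso: "(\<Sum>r\<in>UNIV. norm (replace_row B i v $ r)) = (\<Sum>r\<in>UNIV. norm (B0 $ r)) + norm v"
    unfolding B0_def sum_rows_replace_row by simp
  show ?thesis
    unfolding spca_obj_def fit ridge lasso
    by (simp only: R_def B0_def x_def) (simp add: distrib_left distrib_right)
qed

theorem claim1:
  fixes X :: "real^'p^'n" and A :: "real^'k^'p" and B :: "real^'k^'p"
    and lam lam1 :: real
  assumes orth: "transpose A ** A = mat 1"
    and lam_pos: "lam > 0" and lam1_pos: "lam1 > 0"
    and minimizer: "\<forall>B'. spca_obj X A lam lam1 B \<le> spca_obj X A lam lam1 B'"
  shows "\<forall>i. (B $ i = 0 \<longleftrightarrow>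
    norm (transpose A *v (transpose X *v column i X)
          - (\<Sum>j\<in>UNIV - {i}. (column j X \<bullet> column i X) *\<^sub>R (B $ j))) \<le> lam1 / 2)"
proof
  fix i
  let ?d = "transpose A *v (transpose X *v column i X)
          - (\<Sum>j\<in>UNIV - {i}. (column j X \<bullet> column i X) *\<^sub>R (B $ j))"
  let ?a = "column i X \<bullet> column i X + lam"
  define q where "q v = ?a * (v \<bullet> v) - 2 * (?d \<bullet> v) + lam1 * norm v" for v
  have obj: "spca_obj X A lam lam1 (replace_row B i v)
      = spca_obj X A lam lam1 (replace_row B i 0) + q v" for v
    unfolding q_def spca_obj_replace_row[OF orth, of X lam lam1 B i v] by simp
  have "q (B $ i) \<le> q v" for v
    using minimizer[rule_format, of "replace_row B i v"] obj[of "B $ i"] obj[of v]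
    by (simp del: replace_row_nth)
  moreover have "?a > 0" using lam_pos by (simp add: add_nonneg_pos)
  ultimately show "B $ i = 0 \<longleftrightarrow> norm ?d \<le> lam1 / 2"
    using lam1_pos unfolding q_def by (intro group_lasso_minimizer_eq_0_iff) auto
qed

end
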